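(* The functions $G_1(\zeta)=\sum_{n=0}^\infty A_n\zeta^{4+n}$ and $G_2(\zeta)=\sum_{n=0}^\infty B_n\zeta^{n-3}$ are two linearly independent solutions on the circle $\{|\zeta|=r\}$ of $G''+12Y_0G=0$, where $Y_0(\zeta)=-\zeta^{-2}+\zeta^2P(\zeta)$, and their Wronskian is $G_1G_2'-G_2G_1'=-7$.
   Context: $r=\tfrac{7}{10}$, $x_0=-\tfrac{770766}{323285}$; $a_0=-x_0/10$, $a_1=-1/6$, $a_2=\tfrac{19949}{321055}$, $a_3=0$, $a_n=-\tfrac{6}{(n+5)(n-2)}\sum_{k=0}^{n-4}a_ka_{n-4-k}$ for $4\le n\le17$, and $P(\zeta)=\sum_{n=0}^{17}a_n\zeta^n$. $A_0=1$, $A_1=A_2=A_3=0$, $A_n=-\tfrac{12}{n(n+7)}\sum_{k=0}^{\min\{n-4,17\}}a_kA_{n-4-k}$ ($n\ge4$); $B_0=1$, $B_1=B_2=B_3=B_7=0$, $B_n=-\tfrac{12}{n(n-7)}\sum_{k=0}^{\min\{n-4,17\}}a_kB_{n-4-k}$ ($n\ge4$, $n\neq7$). *)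

theory Defs
  imports "HOL-Analysis.Analysis"
begin

definition r6 :: real where "r6 = 7/10"

definition x0 :: real where "x0 = - 770766 / 323285"

text \<open>Coefficients a_n for n \<le> 17 as in the paper; set to 0 for n > 17 (never used there).\<close>
fun acoef :: "nat \<Rightarrow> real" where
  "acoef n =
     (if n = 0 then - x0 / 10
      else if n = 1 then - 1 / 6
      else if n = 2 then 19949 / 321055
      else if n = 3 then 0
      else if n \<le> 17 then
        - 6 / ((real n + 5) * (real n - 2)) * (\<Sum>k = 0..n - 4. acoef k * acoef (n - 4 - k))
      else 0)"

definition Ppoly :: "complex \<Rightarrow> complex" where
  "Ppoly z = (\<Sum>n = 0..17. complex_of_real (acoef n) * z ^ n)"

fun Acoef :: "nat \<Rightarrow> real" where
  "Acoef n =
     (if n = 0 then 1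
      else if n < 4 then 0
      else - 12 / (real n * (real n + 7)) *
             (\<Sum>k = 0..min (n - 4) 17. acoef k * Acoef (n - 4 - k)))"

fun Bcoef :: "nat \<Rightarrow> real" where
  "Bcoef n =
     (if n = 0 then 1
      else if n < 4 \<or> n = 7 then 0
      else - 12 / (real n * (real n - 7)) *
             (\<Sum>k = 0..min (n - 4) 17. acoef k * Bcoef (n - 4 - k)))"

definition Y0 :: "complex \<Rightarrow> complex" where
  "Y0 z = - 1 / z ^ 2 + z ^ 2 * Ppoly z"

definition G1 :: "complex \<Rightarrow> complex" where
  "G1 z = (\<Sum>n. complex_of_real (Acoef n) * z ^ (4 + n))"

definition G2 :: "complex \<Rightarrow> complex" where
  "G2 z = (\<Sum>n. complex_of_real (Bcoef n) * z powi (int n - 3))"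

end

theory Submission
  imports Defs "HOL-Complex_Analysis.Complex_Analysis"
begin

text \<open>
  The exponents 4 and -3 are the roots of s(s - 1) = 12. Substituting G = \<zeta>^s H turns
  G'' + 12 Y_0 G = 0 into the reduced equation \<zeta> H'' + 2 s H' + 12 \<zeta>^3 P H = 0, whose
  coefficientwise form is exactly the recursion defining A_n (s = 4) and B_n (s = -3).
  The bounds |a_n| \<le> 1/4 and \<Sum> |a_n| \<le> 2/3 give |A_n|, |B_n| \<le> 1 by induction, so
  H_1 and H_2 are holomorphic on the unit disc. In terms of H_1, H_2 the Wronskian of G_1, G_2 is
  \<zeta> (H_1 H_2' - H_2 H_1') - 7 H_1 H_2, which is holomorphic on the whole disc with vanishing
  derivative by the reduced equations, hence equal to its value -7 at \<zeta> = 0.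
  Linear independence on |\<zeta>| = r follows from the maximum modulus principle, applied first to
  c_1 \<zeta>^7 H_1 + c_2 H_2 and then to c_1 H_1.
\<close>

section \<open>Frobenius solutions of a second order equation with a double pole\<close>

lemma deriv_power_int_mult:
  fixes s :: int
  assumes "open S" "0 \<notin> S" "H holomorphic_on S"
    and "\<And>w. w \<in> S \<Longrightarrow> G w = w powi s * H w" "z \<in> S"
  shows "deriv G z = of_int s * z powi (s - 1) * H z + z powi s * deriv H z"
proof -
  have "((\<lambda>w. w powi s * H w) has_field_derivative
      of_int s * z powi (s - 1) * H z + z powi s * deriv H z) (at z)"
    using assms(2,5) by (auto intro!: derivative_eq_intros holomorphic_derivI[OF assms(3,1)])
  then have "(G has_field_derivative of_int s * z powi (s - 1) * H z + z powi s * deriv H z) (at z)"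
    by (rule has_field_derivative_transform_within_open[OF _ assms(1,5)]) (simp add: assms(4))
  then show ?thesis by (rule DERIV_imp_deriv)
qed

lemma frobenius_ode:
  fixes s :: int
  assumes "open S" "0 \<notin> S" "H holomorphic_on S"
    and "\<And>w. w \<in> S \<Longrightarrow> G w = w powi s * H w" "z \<in> S"
    and "z * deriv (deriv H) z + 2 * of_int s * deriv H z + z * Q z * H z = 0"
  shows "deriv (deriv G) z + (Q z - of_int (s * (s - 1)) / z^2) * G z = 0"
proof -
  have "z \<noteq> 0" using assms(2,5) by auto
  have "eventually (\<lambda>w. deriv G w = of_int s * w powi (s - 1) * H w + w powi s * deriv H w) (nhds z)"
    using eventually_nhds_in_open[OF assms(1,5)]
    by eventually_elim (rule deriv_power_int_mult[OF assms(1-4)])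
  then have "deriv (deriv G) z
      = deriv (\<lambda>w. of_int s * w powi (s - 1) * H w + w powi s * deriv H w) z"
    by (rule deriv_cong_ev) simp
  also have "\<dots> = of_int s * (of_int s - 1) * z powi (s - 2) * H z
      + 2 * of_int s * z powi (s - 1) * deriv H z + z powi s * deriv (deriv H) z"
    using \<open>z \<noteq> 0\<close>
    by (intro DERIV_imp_deriv)
      (auto intro!: derivative_eq_intros holomorphic_derivI[OF assms(3,1,5)]
         holomorphic_derivI[OF holomorphic_deriv[OF assms(3,1)] assms(1,5)] simp: algebra_simps)
  finally have dd: "deriv (deriv G) z = of_int s * (of_int s - 1) * z powi (s - 2) * H z
      + 2 * of_int s * z powi (s - 1) * deriv H z + z powi s * deriv (deriv H) z" .
  have "deriv (deriv G) z + (Q z - of_int (s * (s - 1)) / z^2) * G z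
      = z powi s / z * (z * deriv (deriv H) z + 2 * of_int s * deriv H z + z * Q z * H z)"
    unfolding dd assms(4)[OF assms(5)] using \<open>z \<noteq> 0\<close>
    by (simp add: power_int_diff field_simps power2_eq_square)
  with assms(6) show ?thesis by simp
qed

lemma frobenius_wronskian:
  fixes s t :: int
  assumes "open S" "0 \<notin> S" "H1 holomorphic_on S" "H2 holomorphic_on S"
    and "\<And>w. w \<in> S \<Longrightarrow> G1 w = w powi s * H1 w" "\<And>w. w \<in> S \<Longrightarrow> G2 w = w powi t * H2 w"
    and "z \<in> S" "s + t = 1"
  shows "G1 z * deriv G2 z - G2 z * deriv G1 z
       = z * (H1 z * deriv H2 z - H2 z * deriv H1 z) + of_int (t - s) * H1 z * H2 z"
proof -
  have "z \<noteq> 0" using assms(2,7) by auto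
  then have "z powi s * z powi t = z" "z powi s * z powi (t - 1) = 1" "z powi t * z powi (s - 1) = 1"
    using \<open>s + t = 1\<close> by (simp_all flip: power_int_add add: algebra_simps)
  then show ?thesis
    using deriv_power_int_mult[OF assms(1,2,3,5,7)] deriv_power_int_mult[OF assms(1,2,4,6,7)]
    by (simp add: assms(5-7) algebra_simps)
qed

lemma reduced_wronskian_eq_at_0:
  fixes s t :: complex
  assumes "H1 holomorphic_on ball 0 R" "H2 holomorphic_on ball 0 R"
    and "\<And>z. z \<in> ball 0 R \<Longrightarrow> z * deriv (deriv H1) z + 2 * s * deriv H1 z + z * Q z * H1 z = 0"
    and "\<And>z. z \<in> ball 0 R \<Longrightarrow> z * deriv (deriv H2) z + 2 * t * deriv H2 z + z * Q z * H2 z = 0"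
    and "s + t = 1" "z \<in> ball 0 R"
  shows "z * (H1 z * deriv H2 z - H2 z * deriv H1 z) + (t - s) * H1 z * H2 z = (t - s) * H1 0 * H2 0"
proof -
  define W where "W w = w * (H1 w * deriv H2 w - H2 w * deriv H1 w) + (t - s) * H1 w * H2 w" for w
  have "(W has_field_derivative 0) (at w)" if w: "w \<in> ball 0 R" for w
  proof -
    have ode: "w * deriv (deriv H1) w = - 2 * s * deriv H1 w - w * Q w * H1 w"
        "w * deriv (deriv H2) w = - 2 * t * deriv H2 w - w * Q w * H2 w"
      using assms(3,4)[OF w] by algebra+
    have "(H1 w * deriv H2 w - H2 w * deriv H1 w)
        + H1 w * (w * deriv (deriv H2) w) - H2 w * (w * deriv (deriv H1) w)
        + (t - s) * (deriv H1 w * H2 w + H1 w * deriv H2 w)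
      = (1 - s - t) * (H1 w * deriv H2 w - H2 w * deriv H1 w)"
      unfolding ode by (simp add: algebra_simps)
    also have "\<dots> = 0" using \<open>s + t = 1\<close> by (simp add: diff_diff_eq)
    finally have D: "(H1 w * deriv H2 w - H2 w * deriv H1 w)
        + H1 w * (w * deriv (deriv H2) w) - H2 w * (w * deriv (deriv H1) w)
        + (t - s) * (deriv H1 w * H2 w + H1 w * deriv H2 w) = 0" .
    show ?thesis
      unfolding W_def[abs_def]
      by (rule derivative_eq_intros holomorphic_derivI[OF assms(1) open_ball w]
          holomorphic_derivI[OF assms(2) open_ball w]
          holomorphic_derivI[OF holomorphic_deriv[OF assms(1) open_ball] open_ball w]
          holomorphic_derivI[OF holomorphic_deriv[OF assms(2) open_ball] open_ball w] refl)+
        (use D in \<open>simp add: algebra_simps\<close>)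
  qed
  then obtain c where "\<And>w. w \<in> ball 0 R \<Longrightarrow> W w = c"
    using has_field_derivative_zero_constant[OF convex_ball] by (metis at_within_open open_ball)
  moreover have "0 \<in> ball 0 R" using \<open>z \<in> ball 0 R\<close> by (metis centre_in_ball mem_ball_0 norm_ge_zero le_less_trans)
  ultimately have "W z = W 0" using \<open>z \<in> ball 0 R\<close> by metis
  then show ?thesis by (simp add: W_def)
qed

lemma holomorphic_zero_on_sphere_imp_zero_at_centre:
  fixes F :: "complex \<Rightarrow> complex"
  assumes "F holomorphic_on ball a R" "0 < r" "r < R" "\<And>z. z \<in> sphere a r \<Longrightarrow> F z = 0"
  shows "F a = 0"
proof -
  have "norm (F a) \<le> 0"
  proof (rule maximum_modulus_frontier[of F "ball a r"])
    show "F holomorphic_on interior (ball a r)"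
      using assms(1,3) by (auto intro: holomorphic_on_subset)
    show "continuous_on (closure (ball a r)) F"
      using assms(1-3) by (auto intro!: holomorphic_on_imp_continuous_on intro: holomorphic_on_subset)
  qed (use assms(2,4) in auto)
  then show ?thesis by simp
qed

lemma
  fixes c :: "nat \<Rightarrow> complex" and s :: int
  assumes "summable (\<lambda>n. c n * z ^ n)" "z \<noteq> 0"
  shows summable_power_int_series: "summable (\<lambda>n. c n * z powi (int n + s))"
    and suminf_power_int_series: "(\<Sum>n. c n * z powi (int n + s)) = z powi s * (\<Sum>n. c n * z ^ n)"
proof -
  have *: "c n * z powi (int n + s) = z powi s * (c n * z ^ n)" for n
    using \<open>z \<noteq> 0\<close> by (simp add: power_int_add)
  show "summable (\<lambda>n. c n * z powi (int n + s))"
    unfolding * by (rule summable_mult[OF assms(1)])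
  show "(\<Sum>n. c n * z powi (int n + s)) = z powi s * (\<Sum>n. c n * z ^ n)"
    unfolding * by (rule suminf_mult[OF assms(1)])
qed

lemma fps_conv_radius_ge_1_if_bounded:
  fixes F :: "'a :: {banach, real_normed_div_algebra} fps"
  assumes "\<And>n. norm (fps_nth F n) \<le> 1"
  shows "fps_conv_radius F \<ge> 1"
  unfolding fps_conv_radius_def
proof (rule conv_radius_geI_ex')
  fix r :: real assume r: "0 < r" "ereal r < 1"
  show "summable (\<lambda>n. fps_nth F n * of_real r ^ n)"
  proof (rule summable_comparison_test[of _ "\<lambda>n. r ^ n"])
    show "\<exists>N. \<forall>n\<ge>N. norm (fps_nth F n * of_real r ^ n) \<le> r ^ n"
      using r by (auto simp: norm_mult norm_power intro!: mult_left_le_one_le assms)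
    show "summable (\<lambda>n. r ^ n)" using r by (intro summable_geometric) auto
  qed
qed

lemma ball_subset_eball_fps_conv_radius:
  fixes F :: "'a :: {banach, real_normed_div_algebra} fps"
  assumes "fps_conv_radius F \<ge> 1"
  shows "ball (0 :: 'a) 1 \<subseteq> eball 0 (fps_conv_radius F)"
proof
  fix x :: 'a assume "x \<in> ball 0 1"
  then have "ereal (norm x) < ereal 1" by simp
  also have "\<dots> \<le> fps_conv_radius F" using assms by (simp add: one_ereal_def)
  finally show "x \<in> eball 0 (fps_conv_radius F)" by simp
qed

lemma fps_reduced_ode_if_recurrence:
  fixes F P :: "'a :: field fps" and s :: 'a
  assumes "fps_nth F 1 = 0" "fps_nth F 2 = 0" "fps_nth F 3 = 0"
    and "\<And>m. 4 \<le> m \<Longrightarrow> of_nat m * (of_nat m + 2 * s - 1) * fps_nth F m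
           + (\<Sum>k = 0..m - 4. fps_nth P k * fps_nth F (m - 4 - k)) = 0"
  shows "fps_X * fps_deriv (fps_deriv F) + fps_const (2 * s) * fps_deriv F + fps_X ^ 3 * (P * F) = 0"
proof (rule fps_ext)
  fix n
  show "fps_nth (fps_X * fps_deriv (fps_deriv F) + fps_const (2 * s) * fps_deriv F + fps_X ^ 3 * (P * F)) n
      = fps_nth 0 n"
  proof (cases "n < 3")
    case True
    then have "fps_nth F (Suc n) = 0"
      using assms(1-3) by (auto simp: less_Suc_eq numeral_eq_Suc)
    with True show ?thesis by (simp add: fps_X_power_mult_nth)
  next
    case False
    then obtain m where n: "n = m + 3" by (metis add.commute le_Suc_ex not_less)
    have "fps_nth (fps_X ^ 3 * (P * F)) n = (\<Sum>k = 0..m. fps_nth P k * fps_nth F (m - k))"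
      by (simp add: n fps_X_power_mult_nth) (simp add: fps_mult_nth)
    then have "fps_nth (fps_X * fps_deriv (fps_deriv F) + fps_const (2 * s) * fps_deriv F + fps_X ^ 3 * (P * F)) n
        = of_nat (m + 4) * (of_nat (m + 4) + 2 * s - 1) * fps_nth F (m + 4)
          + (\<Sum>k = 0..m. fps_nth P k * fps_nth F (m - k))"
      by (simp add: n fps_X_mult_nth numeral_eq_Suc algebra_simps)
    also have "\<dots> = 0"
      using assms(4)[of "m + 4"] by simp
    finally show ?thesis by simp
  qed
qed

lemma reduced_ode_eval_fps:
  fixes F P :: "complex fps" and s :: complex
  assumes "fps_X * fps_deriv (fps_deriv F) + fps_const (2 * s) * fps_deriv F + fps_X ^ 3 * (P * F) = 0"
    and "norm z < fps_conv_radius F" "norm z < fps_conv_radius P"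
  shows "z * deriv (deriv (eval_fps F)) z + 2 * s * deriv (eval_fps F) z
      + z * (z^2 * eval_fps P z) * eval_fps F z = 0"
proof -
  have deriv_rad: "norm z < fps_conv_radius (fps_deriv G)"
    if "norm z < fps_conv_radius G" for G :: "complex fps"
    using that fps_conv_radius_deriv[of G] by (rule less_le_trans)
  have mult_rad: "norm z < fps_conv_radius (G * K)"
    if "norm z < fps_conv_radius G" "norm z < fps_conv_radius K" for G K :: "complex fps"
    using that by (intro less_le_trans[OF _ fps_conv_radius_mult]) simp
  have add_rad: "norm z < fps_conv_radius (G + K)"
    if "norm z < fps_conv_radius G" "norm z < fps_conv_radius K" for G K :: "complex fps"
    using that by (intro less_le_trans[OF _ fps_conv_radius_add]) simp
  have "z \<in> eball 0 (fps_conv_radius F)" using assms(2) by simp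
  then have "eventually (\<lambda>w. w \<in> eball 0 (fps_conv_radius F)) (nhds z)"
    by (rule eventually_nhds_in_open[OF open_eball])
  then have "eventually (\<lambda>w. deriv (eval_fps F) w = eval_fps (fps_deriv F) w) (nhds z)"
    by (rule eventually_mono) (simp add: eval_fps_deriv)
  then have "deriv (deriv (eval_fps F)) z = eval_fps (fps_deriv (fps_deriv F)) z"
    using eval_fps_deriv[OF deriv_rad[OF assms(2)]] by (metis deriv_cong_ev)
  moreover have "deriv (eval_fps F) z = eval_fps (fps_deriv F) z"
    using eval_fps_deriv[OF assms(2)] by simp
  moreover have "eval_fps (fps_X * fps_deriv (fps_deriv F) + fps_const (2 * s) * fps_deriv F
      + fps_X ^ 3 * (P * F)) z = 0"
    using assms(1) by simp
  ultimately show ?thesis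
    using assms(2,3)
    by (simp add: eval_fps_add eval_fps_mult deriv_rad mult_rad add_rad power2_eq_square power3_eq_cube mult_ac)
qed

section \<open>Bounds for the coefficients\<close>

declare acoef.simps [simp del] Acoef.simps [simp del] Bcoef.simps [simp del]

lemma acoef_0: "acoef 0 = 385383/1616425"
  by (subst acoef.simps) (simp add: x0_def)

lemma acoef_1: "acoef (Suc 0) = - 1/6"
  by (subst acoef.simps) simp

lemma acoef_2: "acoef 2 = 19949/321055"
  by (subst acoef.simps) simp

lemma acoef_3: "acoef 3 = 0"
  by (subst acoef.simps) simp

lemma acoef_recurrence:
  "4 \<le> n \<Longrightarrow> n \<le> 17 \<Longrightarrow>
    acoef n = - 6 / ((real n + 5) * (real n - 2)) * (\<Sum>k = 0..n - 4. acoef k * acoef (n - 4 - k))"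
  by (subst acoef.simps) simp

lemma acoef_eq_0: "17 < n \<Longrightarrow> acoef n = 0"
  by (subst acoef.simps) simp

lemma abs_acoef_le: "\<bar>acoef n\<bar> \<le> 1/4"
proof (induction n rule: less_induct)
  case (less n)
  consider "n \<le> 3" | "4 \<le> n" "n \<le> 17" | "17 < n" by linarith
  then show ?case
  proof cases
    case 1
    then have "n = 0 \<or> n = 1 \<or> n = 2 \<or> n = 3" by auto
    then show ?thesis using acoef_0 acoef_1 acoef_2 acoef_3 by auto
  next
    case 2
    have "\<bar>\<Sum>k = 0..n - 4. acoef k * acoef (n - 4 - k)\<bar>
        \<le> (\<Sum>k = 0..n - 4. \<bar>acoef k\<bar> * \<bar>acoef (n - 4 - k)\<bar>)"
      unfolding abs_mult [symmetric] by (rule sum_abs)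
    also have "\<dots> \<le> (\<Sum>k = 0..n - 4. 1/4 * (1/4))"
      using less 2 by (intro sum_mono mult_mono) auto
    also have "\<dots> = (real n - 3) / 16"
      using 2 by (simp add: of_nat_diff)
    finally have conv: "\<bar>\<Sum>k = 0..n - 4. acoef k * acoef (n - 4 - k)\<bar> \<le> (real n - 3) / 16" .
    have pos: "(real n + 5) * (real n - 2) > 0" using 2 by simp
    have "\<bar>acoef n\<bar> = 6 / ((real n + 5) * (real n - 2)) * \<bar>\<Sum>k = 0..n - 4. acoef k * acoef (n - 4 - k)\<bar>"
      using acoef_recurrence[OF 2] pos 2 by (simp add: abs_mult abs_of_pos)
    also have "\<dots> \<le> 6 / ((real n + 5) * (real n - 2)) * ((real n - 3) / 16)"
      using conv pos by (intro mult_left_mono) auto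
    also have "\<dots> \<le> 1/4"
    proof -
      have "4 * 4 \<le> real n * real n" using 2 by (intro mult_mono) auto
      then show ?thesis using pos 2 by (simp add: field_simps)
    qed
    finally show ?thesis .
  qed (simp add: acoef_eq_0)
qed

text \<open>Bounding each a_n with n \<ge> 4 through its recursion by the total \<sigma> = \<Sum> |a_k| gives
  \<sigma> \<le> 0.468 + 0.29 \<sigma>.\<close>
lemma sum_abs_acoef_le: "(\<Sum>k = 0..17. \<bar>acoef k\<bar>) \<le> 2/3"
proof -
  define \<sigma> where "\<sigma> = (\<Sum>k = 0..17. \<bar>acoef k\<bar>)"
  have tail: "\<bar>acoef n\<bar> \<le> 3 / (2 * ((real n + 5) * (real n - 2))) * \<sigma>" if n: "4 \<le> n" "n \<le> 17" for n
  proof -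
    have "\<bar>\<Sum>k = 0..n - 4. acoef k * acoef (n - 4 - k)\<bar>
        \<le> (\<Sum>k = 0..n - 4. \<bar>acoef k\<bar> * \<bar>acoef (n - 4 - k)\<bar>)"
      unfolding abs_mult [symmetric] by (rule sum_abs)
    also have "\<dots> \<le> (\<Sum>k = 0..n - 4. \<bar>acoef k\<bar> * (1/4))"
      by (intro sum_mono mult_left_mono abs_acoef_le abs_ge_zero)
    also have "\<dots> \<le> (\<Sum>k = 0..17. \<bar>acoef k\<bar> * (1/4))"
      using n by (intro sum_mono2) auto
    also have "\<dots> = \<sigma> / 4" by (simp add: \<sigma>_def sum_divide_distrib)
    finally have conv: "\<bar>\<Sum>k = 0..n - 4. acoef k * acoef (n - 4 - k)\<bar> \<le> \<sigma> / 4" .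
    have pos: "(real n + 5) * (real n - 2) > 0" using n by simp
    have "\<bar>acoef n\<bar> = 6 / ((real n + 5) * (real n - 2)) * \<bar>\<Sum>k = 0..n - 4. acoef k * acoef (n - 4 - k)\<bar>"
      using acoef_recurrence[OF n] pos n by (simp add: abs_mult abs_of_pos)
    also have "\<dots> \<le> 6 / ((real n + 5) * (real n - 2)) * (\<sigma> / 4)"
      using conv pos by (intro mult_left_mono) auto
    finally show ?thesis by (simp add: mult_ac)
  qed
  have "{0..17::nat} = {0..3} \<union> {4..17}" by auto
  then have "\<sigma> = (\<Sum>k = 0..3. \<bar>acoef k\<bar>) + (\<Sum>k = 4..17. \<bar>acoef k\<bar>)"
    unfolding \<sigma>_def by (simp add: sum.union_disjoint)
  also have "(\<Sum>k = 0..3. \<bar>acoef k\<bar>) = 385383/1616425 + 1/6 + 19949/321055"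
    using acoef_0 acoef_1 acoef_2 acoef_3 by (simp add: atLeast0_atMost_Suc numeral_eq_Suc)
  also have "(\<Sum>k = 4..17. \<bar>acoef k\<bar>) \<le> (\<Sum>n = 4..17. 3 / (2 * ((real n + 5) * (real n - 2)))) * \<sigma>"
    unfolding sum_distrib_right by (intro sum_mono tail) auto
  also have "\<dots> \<le> 29/100 * \<sigma>"
    by (intro mult_right_mono) (auto simp: \<sigma>_def sum.atLeast_Suc_atMost)
  finally show ?thesis unfolding \<sigma>_def by simp
qed

lemma Acoef_0: "Acoef 0 = 1"
  by (subst Acoef.simps) simp

lemma Acoef_eq_0: "0 < n \<Longrightarrow> n < 4 \<Longrightarrow> Acoef n = 0"
  by (subst Acoef.simps) simp

lemma Bcoef_0: "Bcoef 0 = 1"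
  by (subst Bcoef.simps) simp

lemma Bcoef_eq_0: "0 < n \<Longrightarrow> n < 4 \<or> n = 7 \<Longrightarrow> Bcoef n = 0"
  by (subst Bcoef.simps) auto

lemma abs_sum_acoef_mult_le:
  assumes "\<And>j. j \<le> N \<Longrightarrow> \<bar>c j\<bar> \<le> 1"
  shows "\<bar>\<Sum>k = 0..min N 17. acoef k * c (N - k)\<bar> \<le> 2/3"
proof -
  have "\<bar>\<Sum>k = 0..min N 17. acoef k * c (N - k)\<bar>
      \<le> (\<Sum>k = 0..min N 17. \<bar>acoef k\<bar> * \<bar>c (N - k)\<bar>)"
    unfolding abs_mult [symmetric] by (rule sum_abs)
  also have "\<dots> \<le> (\<Sum>k = 0..min N 17. \<bar>acoef k\<bar>)"
    using assms by (intro sum_mono mult_left_le) auto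
  also have "\<dots> \<le> (\<Sum>k = 0..17. \<bar>acoef k\<bar>)" by (intro sum_mono2) auto
  also have "\<dots> \<le> 2/3" by (rule sum_abs_acoef_le)
  finally show ?thesis .
qed

lemma abs_Acoef_le: "\<bar>Acoef n\<bar> \<le> 1"
proof (induction n rule: less_induct)
  case (less n)
  show ?case
  proof (cases "n < 4")
    case True
    then show ?thesis by (cases "n = 0") (simp_all add: Acoef_0 Acoef_eq_0)
  next
    case False
    have conv: "\<bar>\<Sum>k = 0..min (n - 4) 17. acoef k * Acoef (n - 4 - k)\<bar> \<le> 2/3"
      using less False by (intro abs_sum_acoef_mult_le) auto
    have "44 \<le> real n * (real n + 7)"
      using False mult_mono[of 4 "real n" 11 "real n + 7"] by simp
    then have factor: "12 / (real n * (real n + 7)) \<le> 12 / 44"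
      by (intro divide_left_mono) auto
    have "\<bar>Acoef n\<bar> = 12 / (real n * (real n + 7)) * \<bar>\<Sum>k = 0..min (n - 4) 17. acoef k * Acoef (n - 4 - k)\<bar>"
      using False by (subst Acoef.simps) (simp add: abs_mult)
    also have "\<dots> \<le> 12 / 44 * (2/3)"
      using factor conv by (rule mult_mono) auto
    finally show ?thesis by simp
  qed
qed

text \<open>For n = 5, 6 the factor 12 / (n |n - 7|) is too large for the uniform induction below,
  so B_4, B_5, B_6 are computed.\<close>
lemma Bcoef_4_5_6: "Bcoef 4 = acoef 0" "Bcoef 5 = 6/5 * acoef (Suc 0)" "Bcoef 6 = 2 * acoef 2"
  by (subst Bcoef.simps; simp add: Bcoef_0 Bcoef_eq_0 numeral_eq_Suc)+

lemma abs_Bcoef_le: "\<bar>Bcoef n\<bar> \<le> 1"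
proof (induction n rule: less_induct)
  case (less n)
  consider "n < 4 \<or> n = 7" | "n = 4 \<or> n = 5 \<or> n = 6" | "8 \<le> n" by fastforce
  then show ?case
  proof cases
    case 1
    then show ?thesis by (cases "n = 0") (simp_all add: Bcoef_0 Bcoef_eq_0)
  next
    case 2
    then show ?thesis using Bcoef_4_5_6 acoef_0 acoef_1 acoef_2 by auto
  next
    case 3
    have conv: "\<bar>\<Sum>k = 0..min (n - 4) 17. acoef k * Bcoef (n - 4 - k)\<bar> \<le> 2/3"
      using less 3 by (intro abs_sum_acoef_mult_le) auto
    have "8 \<le> real n * (real n - 7)"
      using 3 mult_mono[of 8 "real n" 1 "real n - 7"] by simp
    then have factor: "12 / (real n * (real n - 7)) \<le> 12 / 8"
      by (intro divide_left_mono) auto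
    have "\<bar>Bcoef n\<bar> = 12 / (real n * (real n - 7)) * \<bar>\<Sum>k = 0..min (n - 4) 17. acoef k * Bcoef (n - 4 - k)\<bar>"
      using 3 by (subst Bcoef.simps) (simp add: abs_mult abs_of_pos)
    also have "\<dots> \<le> 12 / 8 * (2/3)"
      using factor conv by (rule mult_mono) auto
    finally show ?thesis by simp
  qed
qed

lemma sum_acoef_mult_truncate: "(\<Sum>k = 0..N. acoef k * f k) = (\<Sum>k = 0..min N 17. acoef k * f k)"
  by (cases "N \<le> 17") (auto simp: min_def acoef_eq_0 intro!: sum.mono_neutral_right)

lemma Acoef_recurrence:
  assumes "4 \<le> m"
  shows "real m * (real m + 7) * Acoef m + 12 * (\<Sum>k = 0..m - 4. acoef k * Acoef (m - 4 - k)) = 0"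
proof -
  have "real m * (real m + 7) \<noteq> 0" using assms by simp
  then show ?thesis
    using assms unfolding sum_acoef_mult_truncate[where N = "m - 4"]
    by (subst Acoef.simps) (simp add: field_simps)
qed

text \<open>At the resonance m = 7 of the exponent -3 the factor m (m - 7) vanishes, so the recursion
  holds only because the remaining term a_0 B_3 + a_1 B_2 + a_2 B_1 + a_3 B_0 = a_3 is zero;
  otherwise G_2 would need a logarithmic term.\<close>
lemma Bcoef_recurrence:
  assumes "4 \<le> m"
  shows "real m * (real m - 7) * Bcoef m + 12 * (\<Sum>k = 0..m - 4. acoef k * Bcoef (m - 4 - k)) = 0"
proof (cases "m = 7")
  case True
  then show ?thesis
    using acoef_3 by (simp add: Bcoef_eq_0 numeral_eq_Suc)
next
  case False
  then show ?thesis
    using assms unfolding sum_acoef_mult_truncate[where N = "m - 4"]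
    by (subst Bcoef.simps) (simp add: field_simps)
qed

section \<open>The solutions G_1 and G_2\<close>

definition Afps :: "complex fps" where "Afps = Abs_fps (\<lambda>n. of_real (Acoef n))"
definition Bfps :: "complex fps" where "Bfps = Abs_fps (\<lambda>n. of_real (Bcoef n))"
definition Pfps :: "complex fps" where "Pfps = Abs_fps (\<lambda>n. of_real (acoef n))"

lemma fps_conv_radius_Afps: "fps_conv_radius Afps \<ge> 1"
  unfolding Afps_def using abs_Acoef_le by (intro fps_conv_radius_ge_1_if_bounded) simp

lemma fps_conv_radius_Bfps: "fps_conv_radius Bfps \<ge> 1"
  unfolding Bfps_def using abs_Bcoef_le by (intro fps_conv_radius_ge_1_if_bounded) simp

lemma fps_conv_radius_Pfps: "fps_conv_radius Pfps \<ge> 1"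
  unfolding Pfps_def by (intro fps_conv_radius_ge_1_if_bounded) (simp add: order.trans[OF abs_acoef_le])

lemma eval_fps_Pfps: "eval_fps Pfps z = Ppoly z"
  unfolding eval_fps_def Ppoly_def Pfps_def
  by (subst suminf_finite[of "{0..17}"]) (auto simp: acoef_eq_0)

lemma Afps_reduced_ode:
  "fps_X * fps_deriv (fps_deriv Afps) + fps_const (2 * 4) * fps_deriv Afps
     + fps_X ^ 3 * ((fps_const 12 * Pfps) * Afps) = 0"
proof (rule fps_reduced_ode_if_recurrence)
  show "fps_nth Afps 1 = 0" "fps_nth Afps 2 = 0" "fps_nth Afps 3 = 0"
    by (simp_all add: Afps_def Acoef_eq_0)
  fix m :: nat assume "4 \<le> m"
  from arg_cong[OF Acoef_recurrence[OF this], of complex_of_real]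
  show "of_nat m * (of_nat m + 2 * 4 - 1) * fps_nth Afps m
      + (\<Sum>k = 0..m - 4. fps_nth (fps_const 12 * Pfps) k * fps_nth Afps (m - 4 - k)) = 0"
    by (simp add: Afps_def Pfps_def sum_distrib_left mult_ac add_ac)
qed

lemma Bfps_reduced_ode:
  "fps_X * fps_deriv (fps_deriv Bfps) + fps_const (2 * (- 3)) * fps_deriv Bfps
     + fps_X ^ 3 * ((fps_const 12 * Pfps) * Bfps) = 0"
proof (rule fps_reduced_ode_if_recurrence)
  show "fps_nth Bfps 1 = 0" "fps_nth Bfps 2 = 0" "fps_nth Bfps 3 = 0"
    by (simp_all add: Bfps_def Bcoef_eq_0)
  fix m :: nat assume "4 \<le> m"
  from arg_cong[OF Bcoef_recurrence[OF this], of complex_of_real]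
  show "of_nat m * (of_nat m + 2 * (- 3) - 1) * fps_nth Bfps m
      + (\<Sum>k = 0..m - 4. fps_nth (fps_const 12 * Pfps) k * fps_nth Bfps (m - 4 - k)) = 0"
    by (simp add: Bfps_def Pfps_def sum_distrib_left mult_ac add_ac)
qed

lemma Y0_eq: "z \<noteq> 0 \<Longrightarrow> 12 * Y0 z = 12 * z^2 * Ppoly z - 12 / z^2"
  by (simp add: Y0_def field_simps)

lemma reduced_ode_eval_fps_Ppoly:
  fixes F :: "complex fps"
  assumes ode: "fps_X * fps_deriv (fps_deriv F) + fps_const (2 * s) * fps_deriv F
      + fps_X ^ 3 * ((fps_const 12 * Pfps) * F) = 0"
    and "fps_conv_radius F \<ge> 1" "z \<in> ball 0 1"
  shows "z * deriv (deriv (eval_fps F)) z + 2 * s * deriv (eval_fps F) z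
      + z * (12 * z^2 * Ppoly z) * eval_fps F z = 0"
proof -
  have F: "norm z < fps_conv_radius F" and P: "norm z < fps_conv_radius Pfps"
    using assms(3) ball_subset_eball_fps_conv_radius[OF assms(2)]
      ball_subset_eball_fps_conv_radius[OF fps_conv_radius_Pfps] by (auto simp: subset_eq)
  then have P12: "norm z < fps_conv_radius (fps_const 12 * Pfps)"
    by (intro less_le_trans[OF _ fps_conv_radius_mult]) simp
  have "eval_fps (fps_const 12 * Pfps) z = 12 * Ppoly z"
    using P by (simp add: eval_fps_mult eval_fps_Pfps)
  with reduced_ode_eval_fps[OF ode F P12] show ?thesis by (simp add: mult_ac)
qed

lemma frobenius_solution_Y0_ode:
  fixes s :: int and F :: "complex fps"
  assumes "fps_X * fps_deriv (fps_deriv F) + fps_const (2 * of_int s) * fps_deriv F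
      + fps_X ^ 3 * ((fps_const 12 * Pfps) * F) = 0"
    and "fps_conv_radius F \<ge> 1" "s * (s - 1) = 12"
    and "\<And>w. w \<in> ball 0 1 - {0} \<Longrightarrow> G w = w powi s * eval_fps F w"
    and "z \<in> ball 0 1 - {0}"
  shows "deriv (deriv G) z + 12 * Y0 z * G z = 0"
proof -
  have "deriv (deriv G) z + (12 * z^2 * Ppoly z - of_int (s * (s - 1)) / z^2) * G z = 0"
    using assms(4,5) reduced_ode_eval_fps_Ppoly[OF assms(1,2)] ball_subset_eball_fps_conv_radius[OF assms(2)]
    by (intro frobenius_ode[where S = "ball 0 1 - {0}" and H = "eval_fps F"] holomorphic_on_eval_fps) auto
  then show ?thesis
    using assms(3,5) by (simp add: Y0_eq)
qed

lemma
  assumes "z \<in> ball 0 1 - {0}"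
  shows summable_G1_series: "summable (\<lambda>n. complex_of_real (Acoef n) * z ^ (4 + n))"
    and G1_eq_power_int: "G1 z = z powi 4 * eval_fps Afps z"
proof -
  have sum: "summable (\<lambda>n. fps_nth Afps n * z ^ n)"
    using assms ball_subset_eball_fps_conv_radius[OF fps_conv_radius_Afps]
    by (intro summable_fps) (auto simp: subset_eq)
  moreover have "complex_of_real (Acoef n) * z ^ (4 + n) = fps_nth Afps n * z powi (int n + 4)" for n
  proof -
    have "int n + 4 = int (4 + n)" by simp
    then show ?thesis by (simp only: Afps_def fps_nth_Abs_fps power_int_of_nat)
  qed
  ultimately show "summable (\<lambda>n. complex_of_real (Acoef n) * z ^ (4 + n))"
    and "G1 z = z powi 4 * eval_fps Afps z"
    using summable_power_int_series[OF sum, of 4] suminf_power_int_series[OF sum, of 4] assms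
    by (simp_all add: G1_def eval_fps_def)
qed

lemma
  assumes "z \<in> ball 0 1 - {0}"
  shows summable_G2_series: "summable (\<lambda>n. complex_of_real (Bcoef n) * z powi (int n - 3))"
    and G2_eq_power_int: "G2 z = z powi (- 3) * eval_fps Bfps z"
proof -
  have sum: "summable (\<lambda>n. fps_nth Bfps n * z ^ n)"
    using assms ball_subset_eball_fps_conv_radius[OF fps_conv_radius_Bfps]
    by (intro summable_fps) (auto simp: subset_eq)
  then show "summable (\<lambda>n. complex_of_real (Bcoef n) * z powi (int n - 3))"
    and "G2 z = z powi (- 3) * eval_fps Bfps z"
    using summable_power_int_series[OF sum, of "- 3"] suminf_power_int_series[OF sum, of "- 3"] assms
    by (simp_all add: G2_def eval_fps_def Bfps_def)
qed

lemma G1_ode: "z \<in> ball 0 1 - {0} \<Longrightarrow> deriv (deriv G1) z + 12 * Y0 z * G1 z = 0"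
  using Afps_reduced_ode fps_conv_radius_Afps G1_eq_power_int
  by (intro frobenius_solution_Y0_ode[where s = 4 and F = Afps]) auto

lemma G2_ode: "z \<in> ball 0 1 - {0} \<Longrightarrow> deriv (deriv G2) z + 12 * Y0 z * G2 z = 0"
  using Bfps_reduced_ode fps_conv_radius_Bfps G2_eq_power_int
  by (intro frobenius_solution_Y0_ode[where s = "- 3" and F = Bfps]) auto

lemma eval_fps_Afps_Bfps_holomorphic:
  "eval_fps Afps holomorphic_on ball 0 1" "eval_fps Bfps holomorphic_on ball 0 1"
  using ball_subset_eball_fps_conv_radius[OF fps_conv_radius_Afps]
    ball_subset_eball_fps_conv_radius[OF fps_conv_radius_Bfps]
  by (auto intro: holomorphic_on_eval_fps)

lemma G1_G2_holomorphic: "G1 holomorphic_on ball 0 1 - {0}" "G2 holomorphic_on ball 0 1 - {0}"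
proof -
  have hol: "(\<lambda>w. w powi s * eval_fps F w) holomorphic_on ball 0 1 - {0}"
    if "eval_fps F holomorphic_on ball 0 1" for s and F :: "complex fps"
    by (intro holomorphic_on_mult holomorphic_on_power_int holomorphic_on_ident
        holomorphic_on_subset[OF that]) auto
  from hol[where s = 4, OF eval_fps_Afps_Bfps_holomorphic(1)] show "G1 holomorphic_on ball 0 1 - {0}"
    by (rule holomorphic_transform) (simp add: G1_eq_power_int)
  from hol[where s = "- 3", OF eval_fps_Afps_Bfps_holomorphic(2)] show "G2 holomorphic_on ball 0 1 - {0}"
    by (rule holomorphic_transform) (simp add: G2_eq_power_int)
qed

lemma wronskian_G1_G2: "z \<in> ball 0 1 - {0} \<Longrightarrow> G1 z * deriv G2 z - G2 z * deriv G1 z = - 7"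
proof -
  assume z: "z \<in> ball 0 1 - {0}"
  let ?H1 = "eval_fps Afps" and ?H2 = "eval_fps Bfps"
  have "G1 z * deriv G2 z - G2 z * deriv G1 z
      = z * (?H1 z * deriv ?H2 z - ?H2 z * deriv ?H1 z) + of_int (- 3 - 4) * ?H1 z * ?H2 z"
    using z G1_eq_power_int G2_eq_power_int
    by (intro frobenius_wronskian[where S = "ball 0 1 - {0}"]
        holomorphic_on_subset[OF eval_fps_Afps_Bfps_holomorphic(1)]
        holomorphic_on_subset[OF eval_fps_Afps_Bfps_holomorphic(2)]) auto
  also have "\<dots> = (- 3 - 4) * ?H1 0 * ?H2 0"
    using reduced_wronskian_eq_at_0[where s = 4 and t = "- 3", OF eval_fps_Afps_Bfps_holomorphic
      reduced_ode_eval_fps_Ppoly[OF Afps_reduced_ode fps_conv_radius_Afps]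
      reduced_ode_eval_fps_Ppoly[OF Bfps_reduced_ode fps_conv_radius_Bfps]] z
    by simp
  also have "\<dots> = - 7"
    by (simp add: eval_fps_at_0 Afps_def Bfps_def Acoef_0 Bcoef_0)
  finally show ?thesis .
qed

lemma G1_G2_independent_on_circle:
  assumes "0 < r" "r < 1" "\<And>z. cmod z = r \<Longrightarrow> c1 * G1 z + c2 * G2 z = 0"
  shows "c1 = 0" "c2 = 0"
proof -
  let ?H1 = "eval_fps Afps" and ?H2 = "eval_fps Bfps"
  have circle: "z \<in> ball 0 1 - {0}" if "z \<in> sphere 0 r" for z
    using that assms(1,2) by auto
  have "c1 * z ^ 7 * ?H1 z + c2 * ?H2 z = 0" if "z \<in> sphere 0 r" for z
  proof -
    have "z \<noteq> 0" using circle[OF that] by simp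
    then have "c1 * z ^ 7 * ?H1 z + c2 * ?H2 z = z ^ 3 * (c1 * (z ^ 4 * ?H1 z) + c2 * (?H2 z / z ^ 3))"
      by (simp add: field_simps)
    also have "\<dots> = z ^ 3 * (c1 * G1 z + c2 * G2 z)"
      using circle[OF that] by (simp add: G1_eq_power_int G2_eq_power_int power_int_minus_divide)
    also have "\<dots> = 0" using assms(3) that by simp
    finally show ?thesis .
  qed
  moreover have "(\<lambda>z. c1 * z ^ 7 * ?H1 z + c2 * ?H2 z) holomorphic_on ball 0 1"
    by (intro holomorphic_on_add holomorphic_on_mult holomorphic_on_const holomorphic_on_power
        holomorphic_on_ident eval_fps_Afps_Bfps_holomorphic)
  ultimately have "c1 * 0 ^ 7 * ?H1 0 + c2 * ?H2 0 = 0"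
    using holomorphic_zero_on_sphere_imp_zero_at_centre[OF _ assms(1,2)] by blast
  then show "c2 = 0" by (simp add: eval_fps_at_0 Bfps_def Bcoef_0)
  have "c1 * ?H1 z = 0" if "z \<in> sphere 0 r" for z
    using assms(3)[of z] \<open>c2 = 0\<close> circle[OF that] that by (simp add: G1_eq_power_int)
  moreover have "(\<lambda>z. c1 * ?H1 z) holomorphic_on ball 0 1"
    by (intro holomorphic_on_mult holomorphic_on_const eval_fps_Afps_Bfps_holomorphic)
  ultimately have "c1 * ?H1 0 = 0"
    using holomorphic_zero_on_sphere_imp_zero_at_centre[OF _ assms(1,2)] by blast
  then show "c1 = 0" by (simp add: eval_fps_at_0 Afps_def Acoef_0)
qed

theorem lemma6p7:
  shows "(\<exists>S. open S \<and> sphere 0 r6 \<subseteq> S \<and> G1 holomorphic_on S \<and> G2 holomorphic_on S)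
    \<and> (\<forall>z. cmod z = r6 \<longrightarrow>
          summable (\<lambda>n. complex_of_real (Acoef n) * z ^ (4 + n))
        \<and> summable (\<lambda>n. complex_of_real (Bcoef n) * z powi (int n - 3))
        \<and> deriv (deriv G1) z + 12 * Y0 z * G1 z = 0
        \<and> deriv (deriv G2) z + 12 * Y0 z * G2 z = 0
        \<and> G1 z * deriv G2 z - G2 z * deriv G1 z = - 7)
    \<and> (\<forall>c1 c2 :: complex. (\<forall>z. cmod z = r6 \<longrightarrow> c1 * G1 z + c2 * G2 z = 0)
          \<longrightarrow> c1 = 0 \<and> c2 = 0)"
proof -
  have r6: "0 < r6" "r6 < 1" by (simp_all add: r6_def)
  then have "\<exists>S. open S \<and> sphere 0 r6 \<subseteq> S \<and> G1 holomorphic_on S \<and> G2 holomorphic_on S"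
    using G1_G2_holomorphic by (intro exI[of _ "ball 0 1 - {0}"]) auto
  moreover have "summable (\<lambda>n. complex_of_real (Acoef n) * z ^ (4 + n))
        \<and> summable (\<lambda>n. complex_of_real (Bcoef n) * z powi (int n - 3))
        \<and> deriv (deriv G1) z + 12 * Y0 z * G1 z = 0
        \<and> deriv (deriv G2) z + 12 * Y0 z * G2 z = 0
        \<and> G1 z * deriv G2 z - G2 z * deriv G1 z = - 7" if "cmod z = r6" for z
  proof -
    have z: "z \<in> ball 0 1 - {0}" using r6 that by auto
    show ?thesis
      using summable_G1_series[OF z] summable_G2_series[OF z] G1_ode[OF z] G2_ode[OF z]
        wronskian_G1_G2[OF z] by blast
  qed
  moreover have "c1 = 0 \<and> c2 = 0" if "\<forall>z. cmod z = r6 \<longrightarrow> c1 * G1 z + c2 * G2 z = 0" for c1 c2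
    using G1_G2_independent_on_circle[OF r6] that by blast
  ultimately show ?thesis by blast
qed

end
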